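(* Let $f$ be a $C^1$ diffeomorphism of $M=\mathbb{R}^d/\mathbb{Z}^d$ and $x\in M$. If $\Gamma_{o(x)}$ is a bijection of $\mathcal{N}$, then $x$ is u-hyperbolic.
   Context: Tangent spaces identified with $\mathbb{R}^d$. $o(x)=(f^k(x))_{k\in\mathbb{Z}}$, $(\Gamma_{\mathbf{x}}\eta)_k=\eta_k-Df(x_{k-1})\eta_{k-1}$. $\mathcal{N}$ is the space of sequences $(\eta_k)_{k\in\mathbb{Z}}$ in $\mathbb{R}^d$ with $\limsup_{|k|\to\infty}\frac1{|k|}\log|\eta_k|\le0$. A point $x$ is u-hyperbolic if there exist subspaces $E^u(x),E^s(x)$ spanning $T_xM$ such that $\limsup_{k\to\infty}\frac1k\log|Df^{-k}(x)\eta^s|>0$ for all nonzero $\eta^s\in E^s(x)$ and $\limsup_{k\to\infty}\frac1k\log|Df^k(x)\eta^u|>0$ for all nonzero $\eta^u\in E^u(x)$. *)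

theory Defs
  imports "HOL-Analysis.Analysis"
begin

text \<open>The torus M = R^d/Z^d is represented through lifts to R^d (type real^'d).
  A vector is integral if all its coordinates are integers.\<close>
definition int_vec :: "real^'d \<Rightarrow> bool" where
  "int_vec v \<longleftrightarrow> (\<forall>i. v $ i \<in> \<int>)"

text \<open>F is a lift of a C^1 diffeomorphism f of the torus, with derivative matrix DF;
  G is the lift of f^{-1} with derivative matrix DG. Both lifts are C^1,
  mutually inverse, and respect the integer lattice (so they descend to the torus,
  where they are mutually inverse maps).\<close>
definition C1_torus_diffeo_lift ::
  "(real^'d \<Rightarrow> real^'d) \<Rightarrow> (real^'d \<Rightarrow> real^'d^'d) \<Rightarrow>
   (real^'d \<Rightarrow> real^'d) \<Rightarrow> (real^'d \<Rightarrow> real^'d^'d) \<Rightarrow> bool" where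
  "C1_torus_diffeo_lift F DF G DG \<longleftrightarrow>
     (\<forall>x. (F has_derivative (\<lambda>h. DF x *v h)) (at x)) \<and> continuous_on UNIV DF \<and>
     (\<forall>y. (G has_derivative (\<lambda>h. DG y *v h)) (at y)) \<and> continuous_on UNIV DG \<and>
     (\<forall>x. G (F x) = x) \<and> (\<forall>y. F (G y) = y) \<and>
     (\<forall>x n. int_vec n \<longrightarrow> int_vec (F (x + n) - F x)) \<and>
     (\<forall>y n. int_vec n \<longrightarrow> int_vec (G (y + n) - G y))"

definition orbit ::
  "(real^'d \<Rightarrow> real^'d) \<Rightarrow> (real^'d \<Rightarrow> real^'d) \<Rightarrow> real^'d \<Rightarrow> int \<Rightarrow> real^'d" where
  "orbit F G x k = (if 0 \<le> k then (F ^^ nat k) x else (G ^^ nat (- k)) x)"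

definition Gamma_orb ::
  "(real^'d \<Rightarrow> real^'d) \<Rightarrow> (real^'d \<Rightarrow> real^'d^'d) \<Rightarrow> (real^'d \<Rightarrow> real^'d) \<Rightarrow>
   real^'d \<Rightarrow> (int \<Rightarrow> real^'d) \<Rightarrow> int \<Rightarrow> real^'d" where
  "Gamma_orb F DF G x \<eta> k = \<eta> k - DF (orbit F G x (k - 1)) *v \<eta> (k - 1)"

text \<open>The space N: limsup_{|k|->oo} (1/|k|) log |eta_k| <= 0, with log 0 = -oo.\<close>
definition tempered_seqs :: "(int \<Rightarrow> real^'d) set" where
  "tempered_seqs = {\<eta>. Limsup (sup at_top at_bot)
      (\<lambda>k::int. if \<eta> k = 0 then -\<infinity> else ereal (ln (norm (\<eta> k)) / real_of_int \<bar>k\<bar>)) \<le> 0}"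

text \<open>Df^k(x) = Df(x_{k-1}) ... Df(x_0) and Df^{-k}(x) = D(f^{-1})(x_{-(k-1)}) ... D(f^{-1})(x_0).\<close>
primrec Dfwd :: "(real^'d \<Rightarrow> real^'d) \<Rightarrow> (real^'d \<Rightarrow> real^'d^'d) \<Rightarrow> real^'d \<Rightarrow> nat \<Rightarrow> real^'d^'d" where
  "Dfwd F DF x 0 = mat 1"
| "Dfwd F DF x (Suc k) = DF ((F ^^ k) x) ** Dfwd F DF x k"

definition upper_exp_rate :: "(nat \<Rightarrow> real^'d) \<Rightarrow> ereal" where
  "upper_exp_rate v = Limsup sequentially
      (\<lambda>k. if v k = 0 then -\<infinity> else ereal (ln (norm (v k)) / real k))"

definition u_hyperbolic ::
  "(real^'d \<Rightarrow> real^'d) \<Rightarrow> (real^'d \<Rightarrow> real^'d^'d) \<Rightarrow> (real^'d \<Rightarrow> real^'d) \<Rightarrow>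
   (real^'d \<Rightarrow> real^'d^'d) \<Rightarrow> real^'d \<Rightarrow> bool" where
  "u_hyperbolic F DF G DG x \<longleftrightarrow>
     (\<exists>Eu Es. subspace Eu \<and> subspace Es \<and> span (Eu \<union> Es) = UNIV \<and>
        (\<forall>v\<in>Es. v \<noteq> 0 \<longrightarrow> upper_exp_rate (\<lambda>k. Dfwd G DG x k *v v) > 0) \<and>
        (\<forall>v\<in>Eu. v \<noteq> 0 \<longrightarrow> upper_exp_rate (\<lambda>k. Dfwd F DF x k *v v) > 0))"

end

theory Submission imports Defs begin

(* Proof idea (invertibility of Gamma forces a hyperbolic splitting).
   Let E^s be the vectors whose forward images Df^k(x) w grow subexponentially
   and E^u those whose backward images Df^{-k}(x) w grow subexponentially.
   Subexponential growth is preserved by sums and scalar multiples, so both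
   sets are subspaces.
   Injectivity: for w in E^s and E^u the two-sided tangent orbit of w lies in
   N and is annihilated by Gamma, hence it is 0 and so w = 0; thus every nonzero
   vector of E^s (E^u) grows exponentially backwards (forwards).
   Surjectivity: for a vector v take eta in N with Gamma eta = v at time 0 and
   0 elsewhere; then eta_0 lies in E^s and eta_0 - v in E^u, so E^s + E^u
   spans everything. *)

section \<open>Subexponential growth\<close>

lemma log_quotient_less_iff:
  fixes v :: "'a::real_normed_vector"
  assumes "w > 0"
  shows "(if v = 0 then -\<infinity> else ereal (ln (norm v) / w)) < ereal e \<longleftrightarrow> norm v < exp (e * w)"
proof (cases "v = 0")
  case False
  then have "ln (norm v) / w < e \<longleftrightarrow> ln (norm v) < ln (exp (e * w))"
    using assms by (simp add: pos_divide_less_eq mult.commute)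
  also have "\<dots> \<longleftrightarrow> norm v < exp (e * w)"
    using False by (subst ln_less_cancel_iff) auto
  finally show ?thesis using False by simp
qed simp

lemma Limsup_log_rate_le_0_iff:
  fixes v :: "'a \<Rightarrow> 'b::real_normed_vector"
  assumes pos: "eventually (\<lambda>x. w x > 0) F"
  shows "Limsup F (\<lambda>x. if v x = 0 then -\<infinity> else ereal (ln (norm (v x)) / w x)) \<le> 0
    \<longleftrightarrow> (\<forall>e>0. eventually (\<lambda>x. norm (v x) < exp (e * w x)) F)"
    (is "Limsup F ?q \<le> 0 \<longleftrightarrow> _")
proof -
  have "Limsup F ?q \<le> 0 \<longleftrightarrow> (\<forall>e>0. eventually (\<lambda>x. ?q x < ereal e) F)"
    unfolding Limsup_le_iff
  proof safe
    fix y :: ereal assume y: "y > 0" and bound: "\<forall>e>0. eventually (\<lambda>x. ?q x < ereal e) F"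
    show "eventually (\<lambda>x. ?q x < y) F"
    proof (cases y)
      case PInf
      then show ?thesis using bound[rule_format, of 1] by (auto elim: eventually_mono)
    qed (use y bound in auto)
  qed auto
  also have "\<dots> \<longleftrightarrow> (\<forall>e>0. eventually (\<lambda>x. norm (v x) < exp (e * w x)) F)"
  proof (intro all_cong1 imp_cong refl)
    fix e :: real
    show "eventually (\<lambda>x. ?q x < ereal e) F \<longleftrightarrow> eventually (\<lambda>x. norm (v x) < exp (e * w x)) F"
      using pos by (rule eventually_cong) (rule log_quotient_less_iff)
  qed
  finally show ?thesis .
qed

lemma upper_exp_rate_le_0_iff:
  "upper_exp_rate v \<le> 0 \<longleftrightarrow> (\<forall>e>0. eventually (\<lambda>k. norm (v k) < exp (e * real k)) sequentially)"
  unfolding upper_exp_rate_def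
  by (rule Limsup_log_rate_le_0_iff) (auto simp: eventually_sequentially intro: exI[of _ 1])

lemma eventually_at_top_at_bot_int:
  "eventually P (sup at_top at_bot :: int filter) \<longleftrightarrow>
     eventually (\<lambda>n. P (int n)) sequentially \<and> eventually (\<lambda>n. P (- int n)) sequentially"
proof -
  have top: "eventually Q (at_top :: int filter) \<longleftrightarrow> eventually (\<lambda>n. Q (int n)) sequentially" for Q
  proof
    assume "eventually Q at_top"
    then obtain N where "\<forall>n\<ge>N. Q n" by (auto simp: eventually_at_top_linorder)
    then show "eventually (\<lambda>n. Q (int n)) sequentially"
      unfolding eventually_sequentially by (intro exI[of _ "nat N"]) auto
  next
    assume "eventually (\<lambda>n. Q (int n)) sequentially"
    then obtain N where N: "\<forall>n\<ge>N. Q (int n)" by (auto simp: eventually_sequentially)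
    have "Q n" if "n \<ge> int N" for n using N[rule_format, of "nat n"] that by auto
    then show "eventually Q at_top" by (auto simp: eventually_at_top_linorder)
  qed
  have "eventually P (at_bot :: int filter) \<longleftrightarrow> eventually (\<lambda>n. P (- n)) at_top"
    by (simp add: at_bot_mirror eventually_filtermap)
  then show ?thesis by (simp add: eventually_sup top)
qed

lemma tempered_seqs_iff:
  "\<eta> \<in> tempered_seqs \<longleftrightarrow>
     upper_exp_rate (\<lambda>n. \<eta> (int n)) \<le> 0 \<and> upper_exp_rate (\<lambda>n. \<eta> (- int n)) \<le> 0"
proof -
  have "\<eta> \<in> tempered_seqs \<longleftrightarrow>
      (\<forall>e>0. eventually (\<lambda>k. norm (\<eta> k) < exp (e * real_of_int \<bar>k\<bar>)) (sup at_top at_bot))"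
    unfolding tempered_seqs_def mem_Collect_eq
    by (rule Limsup_log_rate_le_0_iff)
      (auto simp: eventually_at_top_at_bot_int eventually_sequentially intro: exI[of _ 1])
  then show ?thesis
    unfolding upper_exp_rate_le_0_iff eventually_at_top_at_bot_int by auto
qed

text \<open>This single
  estimate yields closure under sums, scalar multiples and eventual equality.\<close>
lemma upper_exp_rate_dominated:
  fixes u v w :: "nat \<Rightarrow> real^'d"
  assumes u: "upper_exp_rate u \<le> 0" and v: "upper_exp_rate v \<le> 0"
    and ab: "a \<ge> 0" "b \<ge> 0"
    and dom: "eventually (\<lambda>k. norm (w k) \<le> a * norm (u k) + b * norm (v k)) sequentially"
  shows "upper_exp_rate w \<le> 0"
  unfolding upper_exp_rate_le_0_iff
proof (intro allI impI)
  fix e :: real assume e: "e > 0"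
  have "eventually (\<lambda>k. norm (u k) < exp (e/2 * real k)) sequentially"
    "eventually (\<lambda>k. norm (v k) < exp (e/2 * real k)) sequentially"
    using u v e unfolding upper_exp_rate_le_0_iff by (auto dest: spec[of _ "e/2"])
  moreover have "eventually (\<lambda>k. a + b + 1 \<le> exp (e/2 * real k)) sequentially"
  proof -
    have "filterlim (\<lambda>k. exp (e/2 * real k)) at_top sequentially"
      using e by (intro filterlim_compose[OF exp_at_top] filterlim_tendsto_pos_mult_at_top
          [OF tendsto_const _ filterlim_real_sequentially]) auto
    then show ?thesis by (simp add: filterlim_at_top)
  qed
  ultimately show "eventually (\<lambda>k. norm (w k) < exp (e * real k)) sequentially"
    using dom
  proof eventually_elim
    case (elim k)
    let ?h = "exp (e/2 * real k)"
    have "norm (w k) \<le> a * ?h + b * ?h"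
      using elim(1,2,4) ab by (smt (verit) mult_left_mono)
    also have "\<dots> < (a + b + 1) * ?h" by (simp add: distrib_right)
    also have "\<dots> \<le> ?h * ?h" using elim(3) by (intro mult_right_mono) auto
    also have "\<dots> = exp (e * real k)" by (simp flip: exp_add)
    finally show ?case .
  qed
qed

lemma upper_exp_rate_zero: "upper_exp_rate (\<lambda>k. 0 :: real^'d) \<le> 0"
  unfolding upper_exp_rate_le_0_iff by simp

lemma upper_exp_rate_eventually_eq:
  fixes u w :: "nat \<Rightarrow> real^'d"
  assumes "upper_exp_rate u \<le> 0" and "eventually (\<lambda>k. u k = w k) sequentially"
  shows "upper_exp_rate w \<le> 0"
  using assms(2)
  by (intro upper_exp_rate_dominated[where a=1 and b=0, OF assms(1) assms(1)])
    (auto elim: eventually_mono)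

text \<open>The vectors w for which A k w grows subexponentially form a subspace;
  for A k = Df^k(x) this is E^s, for A k = Df^{-k}(x) it is E^u.\<close>
definition subexp_vectors :: "(nat \<Rightarrow> real^'d^'d) \<Rightarrow> (real^'d) set" where
  "subexp_vectors A = {w. upper_exp_rate (\<lambda>k. A k *v w) \<le> 0}"

lemma subspace_subexp_vectors:
  fixes A :: "nat \<Rightarrow> real^'d^'d"
  shows "subspace (subexp_vectors A)"
  unfolding subexp_vectors_def
proof (rule subspaceI, unfold mem_Collect_eq)
  show "upper_exp_rate (\<lambda>k. A k *v 0) \<le> 0"
    using upper_exp_rate_zero by simp
next
  fix u w :: "real^'d"
  assume "upper_exp_rate (\<lambda>k. A k *v u) \<le> 0" "upper_exp_rate (\<lambda>k. A k *v w) \<le> 0"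
  then show "upper_exp_rate (\<lambda>k. A k *v (u + w)) \<le> 0"
    by (rule upper_exp_rate_dominated[where a=1 and b=1])
      (auto simp: matrix_vector_right_distrib norm_triangle_ineq)
next
  fix c :: real and u :: "real^'d"
  assume u: "upper_exp_rate (\<lambda>k. A k *v u) \<le> 0"
  show "upper_exp_rate (\<lambda>k. A k *v (c *\<^sub>R u)) \<le> 0"
    by (rule upper_exp_rate_dominated[where a="\<bar>c\<bar>" and b=0, OF u u])
      (auto simp: matrix_vector_mult_scaleR)
qed

section \<open>Orbits and the tangent cocycle\<close>

lemma derivative_matrix_left_inverse:
  fixes F G :: "real^'d \<Rightarrow> real^'d"
  assumes "(F has_derivative (\<lambda>h. DF *v h)) (at y)"
    and "(G has_derivative (\<lambda>h. DG *v h)) (at (F y))"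
    and "\<forall>x. G (F x) = x"
  shows "DG ** DF = mat 1"
proof -
  have "((G \<circ> F) has_derivative ((\<lambda>h. DG *v h) \<circ> (\<lambda>h. DF *v h))) (at y)"
    using assms(1,2) by (rule diff_chain_at)
  moreover have "G \<circ> F = id" using assms(3) by auto
  ultimately have "((\<lambda>h. DG *v h) \<circ> (\<lambda>h. DF *v h)) = id"
    using has_derivative_unique[OF _ has_derivative_id] by auto
  then have "(DG ** DF) *v h = mat 1 *v h" for h
    by (metis comp_apply id_apply matrix_vector_mul_assoc matrix_vector_mul_lid)
  then show ?thesis by (rule matrix_eq[THEN iffD2, rule_format])
qed

lemma C1_torus_diffeo_lift_derivative_inverse:
  assumes "C1_torus_diffeo_lift F DF G DG"
  shows "DG (F y) ** DF y = mat 1" and "DF (G y) ** DG y = mat 1"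
  using assms unfolding C1_torus_diffeo_lift_def
  by (auto intro!: derivative_matrix_left_inverse)

lemma orbit_of_nat: "orbit F G x (int n) = (F ^^ n) x" "orbit F G x (- int n) = (G ^^ n) x"
  unfolding orbit_def by auto

lemma orbit_step:
  assumes "\<forall>y. F (G y) = y"
  shows "orbit F G x (k + 1) = F (orbit F G x k)"
proof (cases "k \<ge> 0")
  case True
  then have "nat (k + 1) = Suc (nat k)" by simp
  with True show ?thesis unfolding orbit_def by simp
next
  case False
  then consider "k = -1" | "nat (- k) = Suc (nat (- (k + 1)))" "\<not> 0 \<le> k + 1" by linarith
  then show ?thesis using False assms unfolding orbit_def by cases auto
qed

lemma Gamma_orb_backward_step:
  assumes C: "C1_torus_diffeo_lift F DF G DG"
  shows "DG (orbit F G x k) *v (\<eta> k - Gamma_orb F DF G x \<eta> k) = \<eta> (k - 1)"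
proof -
  have "orbit F G x k = F (orbit F G x (k - 1))"
    using orbit_step[of F G x "k - 1"] C by (simp add: C1_torus_diffeo_lift_def)
  then show ?thesis
    unfolding Gamma_orb_def
    by (simp add: matrix_vector_mul_assoc C1_torus_diffeo_lift_derivative_inverse[OF C])
qed

lemma Gamma_orb_forward_solution:
  assumes "\<forall>n. Gamma_orb F DF G x \<eta> (int (Suc n)) = 0"
  shows "\<eta> (int n) = Dfwd F DF x n *v \<eta> 0"
proof (induction n)
  case (Suc n)
  have "\<eta> (int (Suc n)) = DF (orbit F G x (int n)) *v \<eta> (int n)"
    using assms[rule_format, of n] unfolding Gamma_orb_def by simp
  then show ?case
    using Suc.IH by (simp add: orbit_of_nat matrix_vector_mul_assoc)
qed simp

lemma Gamma_orb_backward_solution: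
  assumes C: "C1_torus_diffeo_lift F DF G DG"
    and zero: "\<forall>n. Gamma_orb F DF G x \<eta> (- int (Suc n)) = 0"
  shows "\<eta> (- int (Suc n)) = Dfwd G DG x (Suc n) *v (\<eta> 0 - Gamma_orb F DF G x \<eta> 0)"
proof (induction n)
  case 0
  show ?case
    using Gamma_orb_backward_step[OF C, where x=x and \<eta>=\<eta> and k=0] by (simp add: orbit_def)
next
  case (Suc n)
  let ?w = "\<eta> 0 - Gamma_orb F DF G x \<eta> 0"
  have step: "Dfwd G DG x (Suc (Suc n)) = DG (orbit F G x (- int (Suc n))) ** Dfwd G DG x (Suc n)"
    by (simp only: Dfwd.simps(2) orbit_of_nat)
  have "\<eta> (- int (Suc n) - 1) = DG (orbit F G x (- int (Suc n))) *v \<eta> (- int (Suc n))"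
    using Gamma_orb_backward_step[OF C, where x=x and \<eta>=\<eta> and k="- int (Suc n)"]
      zero[rule_format, of n] by simp
  also have "\<dots> = Dfwd G DG x (Suc (Suc n)) *v ?w"
    by (simp only: Suc.IH step matrix_vector_mul_assoc)
  finally show ?case by simp
qed

definition tangent_orbit ::
  "(real^'d \<Rightarrow> real^'d) \<Rightarrow> (real^'d \<Rightarrow> real^'d^'d) \<Rightarrow> (real^'d \<Rightarrow> real^'d) \<Rightarrow>
   (real^'d \<Rightarrow> real^'d^'d) \<Rightarrow> real^'d \<Rightarrow> real^'d \<Rightarrow> int \<Rightarrow> real^'d" where
  "tangent_orbit F DF G DG x w k =
     (if 0 \<le> k then Dfwd F DF x (nat k) *v w else Dfwd G DG x (nat (- k)) *v w)"

lemma tangent_orbit_of_nat: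
  "tangent_orbit F DF G DG x w (int n) = Dfwd F DF x n *v w"
  "tangent_orbit F DF G DG x w (- int n) = Dfwd G DG x n *v w"
  unfolding tangent_orbit_def by simp (cases "n = 0", simp_all)

lemma Gamma_orb_tangent_orbit:
  assumes C: "C1_torus_diffeo_lift F DF G DG"
  shows "Gamma_orb F DF G x (tangent_orbit F DF G DG x w) k = 0"
proof (cases "k \<ge> 1")
  case True
  let ?\<zeta> = "tangent_orbit F DF G DG x w"
  define n where "n = nat (k - 1)"
  have k: "k = int (Suc n)" and k1: "k - 1 = int n" using True by (auto simp: n_def)
  have "?\<zeta> (int (Suc n)) = DF (orbit F G x (int n)) *v ?\<zeta> (int n)"
    by (simp only: tangent_orbit_of_nat Dfwd.simps orbit_of_nat matrix_vector_mul_assoc)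
  then show ?thesis unfolding Gamma_orb_def k1 by (simp only: k diff_self)
next
  case False
  let ?\<zeta> = "tangent_orbit F DF G DG x w" and ?D = "DG (orbit F G x k)"
  define n where "n = nat (- k)"
  have k: "k = - int n" and k1: "k - 1 = - int (Suc n)" using False by (auto simp: n_def)
  have "?\<zeta> (- int (Suc n)) = DG (orbit F G x (- int n)) *v ?\<zeta> (- int n)"
    by (simp only: tangent_orbit_of_nat Dfwd.simps orbit_of_nat matrix_vector_mul_assoc)
  then have "?\<zeta> (k - 1) = ?D *v ?\<zeta> k" unfolding k1 by (simp only: k)
  moreover have "?D *v (?\<zeta> k - Gamma_orb F DF G x ?\<zeta> k) = ?\<zeta> (k - 1)"
    by (rule Gamma_orb_backward_step[OF C])
  ultimately have "?D *v Gamma_orb F DF G x ?\<zeta> k = 0"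
    by (simp add: matrix_vector_mult_diff_distrib)
  then have "(DF (G (orbit F G x k)) ** ?D) *v Gamma_orb F DF G x ?\<zeta> k = 0"
    by (simp add: matrix_vector_mul_assoc[symmetric])
  then show ?thesis by (simp add: C1_torus_diffeo_lift_derivative_inverse[OF C])
qed

section \<open>The splitting forced by invertibility of Gamma\<close>

text \<open>Injectivity of Gamma on N: a vector growing subexponentially both forwards
  and backwards has a tempered tangent orbit in the kernel of Gamma, so it is 0.\<close>
lemma stable_inter_unstable_trivial:
  assumes C: "C1_torus_diffeo_lift F DF G DG"
    and inj: "inj_on (Gamma_orb F DF G x) tempered_seqs"
    and s: "w \<in> subexp_vectors (Dfwd F DF x)" and u: "w \<in> subexp_vectors (Dfwd G DG x)"
  shows "w = 0"
proof -
  let ?\<zeta> = "tangent_orbit F DF G DG x w"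
  have "?\<zeta> \<in> tempered_seqs"
    using s u unfolding tempered_seqs_iff subexp_vectors_def by (simp add: tangent_orbit_of_nat)
  moreover have "(\<lambda>k. 0) \<in> tempered_seqs"
    unfolding tempered_seqs_iff using upper_exp_rate_zero by simp
  moreover have "Gamma_orb F DF G x ?\<zeta> = (\<lambda>k. 0)"
    using Gamma_orb_tangent_orbit[OF C] by (simp add: fun_eq_iff)
  moreover have "Gamma_orb F DF G x (\<lambda>k. 0) = (\<lambda>k. 0)"
    by (simp add: Gamma_orb_def fun_eq_iff)
  ultimately have "?\<zeta> = (\<lambda>k. 0)" using inj by (metis inj_onD)
  then show "w = 0" using tangent_orbit_of_nat(1)[of F DF G DG x w 0] by (simp add: fun_eq_iff)
qed

text \<open>Surjectivity of Gamma on N: solving Gamma eta = v \<delta>_0 splits v as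
  eta_0 (forward tempered) minus eta_0 - v (backward tempered).\<close>
lemma stable_unstable_span:
  assumes C: "C1_torus_diffeo_lift F DF G DG"
    and surj: "tempered_seqs \<subseteq> Gamma_orb F DF G x ` tempered_seqs"
  shows "span (subexp_vectors (Dfwd G DG x) \<union> subexp_vectors (Dfwd F DF x)) = UNIV"
proof -
  have "v \<in> span (subexp_vectors (Dfwd G DG x) \<union> subexp_vectors (Dfwd F DF x))" for v
  proof -
    define \<delta> where "\<delta> = (\<lambda>k::int. if k = 0 then v else 0)"
    have "eventually (\<lambda>n. 0 = \<delta> (int n)) sequentially"
      "eventually (\<lambda>n. 0 = \<delta> (- int n)) sequentially"
      unfolding \<delta>_def eventually_sequentially by (auto intro: exI[of _ 1])
    then have "\<delta> \<in> tempered_seqs"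
      unfolding tempered_seqs_iff by (auto intro: upper_exp_rate_eventually_eq[OF upper_exp_rate_zero])
    then obtain \<eta> where \<eta>: "\<eta> \<in> tempered_seqs" and G\<eta>: "Gamma_orb F DF G x \<eta> = \<delta>"
      using surj by blast
    have "\<eta> (int n) = Dfwd F DF x n *v \<eta> 0" for n
      by (rule Gamma_orb_forward_solution[where G=G]) (simp add: G\<eta> \<delta>_def)
    with \<eta> have s: "\<eta> 0 \<in> subexp_vectors (Dfwd F DF x)"
      unfolding tempered_seqs_iff subexp_vectors_def by simp
    have "\<eta> (- int (Suc n)) = Dfwd G DG x (Suc n) *v (\<eta> 0 - v)" for n
      using Gamma_orb_backward_solution[OF C, of x \<eta> n] by (simp add: G\<eta> \<delta>_def)
    then have "eventually (\<lambda>n. \<eta> (- int n) = Dfwd G DG x n *v (\<eta> 0 - v)) sequentially"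
      unfolding eventually_sequentially by (metis Suc_le_D)
    with \<eta> have u: "\<eta> 0 - v \<in> subexp_vectors (Dfwd G DG x)"
      unfolding tempered_seqs_iff subexp_vectors_def by (auto intro: upper_exp_rate_eventually_eq)
    have "\<eta> 0 - (\<eta> 0 - v) \<in> span (subexp_vectors (Dfwd G DG x) \<union> subexp_vectors (Dfwd F DF x))"
      using s u by (intro span_diff span_base) auto
    then show ?thesis by simp
  qed
  then show ?thesis by auto
qed

theorem lemma3p5:
  fixes F G :: "real^'d \<Rightarrow> real^'d" and DF DG :: "real^'d \<Rightarrow> real^'d^'d" and x :: "real^'d"
  assumes "C1_torus_diffeo_lift F DF G DG"
    and "bij_betw (Gamma_orb F DF G x) tempered_seqs tempered_seqs"
  shows "u_hyperbolic F DF G DG x"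
proof -
  define Es where "Es = subexp_vectors (Dfwd F DF x)"
  define Eu where "Eu = subexp_vectors (Dfwd G DG x)"
  have inj: "inj_on (Gamma_orb F DF G x) tempered_seqs"
    and surj: "tempered_seqs \<subseteq> Gamma_orb F DF G x ` tempered_seqs"
    using assms(2) by (auto simp: bij_betw_def)
  have "w = 0" if "w \<in> Es" "w \<in> Eu" for w
    using stable_inter_unstable_trivial[OF assms(1) inj] that unfolding Es_def Eu_def by blast
  then have "\<forall>w\<in>Es. w \<noteq> 0 \<longrightarrow> upper_exp_rate (\<lambda>k. Dfwd G DG x k *v w) > 0"
    and "\<forall>w\<in>Eu. w \<noteq> 0 \<longrightarrow> upper_exp_rate (\<lambda>k. Dfwd F DF x k *v w) > 0"
    unfolding Es_def Eu_def subexp_vectors_def by (auto simp: not_le[symmetric])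
  moreover have "subspace Eu" "subspace Es"
    unfolding Es_def Eu_def by (rule subspace_subexp_vectors)+
  moreover have "span (Eu \<union> Es) = UNIV"
    unfolding Es_def Eu_def by (rule stable_unstable_span[OF assms(1) surj])
  ultimately show ?thesis unfolding u_hyperbolic_def by blast
qed

end
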